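(* Let $\sigma:\mathbb R\to\mathbb R$ be a differentiable activation, $L\geq2$, and let $\mathrm{NN}'(\{m'_l\}_{l=0}^L)$ be a fully-connected network with $M_{\mathrm{wide}}$ parameters that is wider than a fully-connected network $\mathrm{NN}(\{m_l\}_{l=0}^L)$ with $M_{\mathrm{narr}}$ parameters (both with $m_L=m'_L=1$). Then for every function $f^*$ in the function space $\mathcal F_{\mathrm{narr}}$ of the narrower network, $O_{f_{\theta_{\mathrm{wide}}}}(f^* )\leq O_{f_{\theta_{\mathrm{narr}}}}(f^* )\leq M_{\mathrm{narr}}$, where $f_{\theta_{\mathrm{wide}}}$, $f_{\theta_{\mathrm{narr}}}$ denote the wider and the narrower network models.
   Context: A fully-connected network $\mathrm{NN}(\{m_l\}_{l=0}^L)$ with input dimension $m_0=d$ and output dimension $m_L=1$ has parameters $\theta=(W^{[1]},b^{[1]},\dots,W^{[L]},b^{[L]})$ with $W^{[l]}\in\mathbb R^{m_l\times m_{l-1}}$, $b^{[l]}\in\mathbb R^{m_l}$ (identified with a vector in $\mathbb R^M$, $M=\sum_{l=0}^{L-1}(m_l+1)m_{l+1}$), and output $f_\theta(x)=W^{[L]}f^{[L-1]}(x)+b^{[L]}$, where $f^{[0]}(x)=x$ and $f^{[l]}(x)=\sigma(W^{[l]}f^{[l-1]}(x)+b^{[l]})$ for $l\in[L-1]$ ($\sigma$ applied entrywise). Its function space is $\{f_\theta:\theta\in\mathbb R^M\}$. $\mathrm{NN}'(\{m'_l\}_{l=0}^L)$ is wider than $\mathrm{NN}(\{m_l\}_{l=0}^L)$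 if $m'_0=m_0$, $m'_L=m_L$, $m'_l\geq m_l$ for all $l\in[L-1]$, and $\sum_{l=1}^{L-1}(m'_l-m_l)>0$. The loss $\ell:\mathbb R\times\mathbb R\to[0,\infty)$ is continuously differentiable with $\ell(u,v)=0$ iff $u=v$. For a model $h_\theta$ with parameters in $\mathbb R^M$ and $f^*$ in its function space: the target set is $\mathcal M_{f^*}=\{\theta:h_\theta=f^*\}$; a dataset of size $n$ from $f^*$ is $\{(x_i,f^*(x_i))\}_{i=1}^n$ with empirical loss $\frac1n\sum_i\ell(u(x_i),f^*(x_i))$ for a function $u$ (identically $0$ if $n=0$); the tangent hyperplane at $\theta'$ is $\{h(\cdot;\theta')+a^\top\nabla_\theta h(\cdot;\theta'):a\in\mathbb R^M\}$; $f^*$ has $n$-sample LLR-guarantee if there exist a dataset of size $n$ from $f^*$ and $\theta'\in\mathcal M_{f^*}$ such that the set of minimizers of the empirical loss over the tangent hyperplane at $\theta'$ is exactly $\{f^*\}$; the optimistic sample size $O_h(f^* )$ is the smallest $n\geq0$ for which $f^*$ has $n$-sample LLR-guarantee. *)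

theory Defs
  imports "HOL-Analysis.Analysis"
begin

text \<open>Parameters are functions on a
finite coordinate set P (identified with R^M, M = card P; coordinates outside P
are fixed to 0).\<close>

definition param_space :: "'i set \<Rightarrow> ('i \<Rightarrow> real) set" where
  "param_space P = {\<theta>. \<forall>i. i \<notin> P \<longrightarrow> \<theta> i = 0}"

definition in_fun_space :: "(('i \<Rightarrow> real) \<Rightarrow> 'x \<Rightarrow> real) \<Rightarrow> 'i set \<Rightarrow> 'x set \<Rightarrow> ('x \<Rightarrow> real) \<Rightarrow> bool" where
  "in_fun_space h P X f \<longleftrightarrow> (\<exists>\<theta>\<in>param_space P. \<forall>x\<in>X. h \<theta> x = f x)"

definition target_set :: "(('i \<Rightarrow> real) \<Rightarrow> 'x \<Rightarrow> real) \<Rightarrow> 'i set \<Rightarrow> 'x set \<Rightarrow> ('x \<Rightarrow> real) \<Rightarrow> ('i \<Rightarrow> real) set" where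
  "target_set h P X f = {\<theta>\<in>param_space P. \<forall>x\<in>X. h \<theta> x = f x}"

definition param_partial :: "(('i \<Rightarrow> real) \<Rightarrow> 'x \<Rightarrow> real) \<Rightarrow> 'i \<Rightarrow> ('i \<Rightarrow> real) \<Rightarrow> 'x \<Rightarrow> real" where
  "param_partial h i \<theta> x = deriv (\<lambda>t. h (\<theta>(i := \<theta> i + t)) x) 0"

definition tangent_hyperplane :: "(('i \<Rightarrow> real) \<Rightarrow> 'x \<Rightarrow> real) \<Rightarrow> 'i set \<Rightarrow> 'x set \<Rightarrow> ('i \<Rightarrow> real) \<Rightarrow> ('x \<Rightarrow> real) set" where
  "tangent_hyperplane h P X \<theta>' =
     {u. \<exists>a. \<forall>x\<in>X. u x = h \<theta>' x + (\<Sum>i\<in>P. a i * param_partial h i \<theta>' x)}"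

definition emp_loss :: "(real \<Rightarrow> real \<Rightarrow> real) \<Rightarrow> 'x list \<Rightarrow> ('x \<Rightarrow> real) \<Rightarrow> ('x \<Rightarrow> real) \<Rightarrow> real" where
  "emp_loss loss xs f u =
     (if xs = [] then 0 else (\<Sum>x\<leftarrow>xs. loss (u x) (f x)) / real (length xs))"

definition LLR_guarantee :: "(real \<Rightarrow> real \<Rightarrow> real) \<Rightarrow> (('i \<Rightarrow> real) \<Rightarrow> 'x \<Rightarrow> real) \<Rightarrow> 'i set \<Rightarrow> 'x set
     \<Rightarrow> ('x \<Rightarrow> real) \<Rightarrow> nat \<Rightarrow> bool" where
  "LLR_guarantee loss h P X f n \<longleftrightarrow>
     (\<exists>xs. length xs = n \<and> set xs \<subseteq> X \<and>
        (\<exists>\<theta>'\<in>target_set h P X f.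
           \<forall>u\<in>tangent_hyperplane h P X \<theta>'.
             (\<forall>v\<in>tangent_hyperplane h P X \<theta>'. emp_loss loss xs f u \<le> emp_loss loss xs f v)
             \<longleftrightarrow> (\<forall>x\<in>X. u x = f x)))"

definition opt_sample_size :: "(real \<Rightarrow> real \<Rightarrow> real) \<Rightarrow> (('i \<Rightarrow> real) \<Rightarrow> 'x \<Rightarrow> real) \<Rightarrow> 'i set \<Rightarrow> 'x set
     \<Rightarrow> ('x \<Rightarrow> real) \<Rightarrow> nat" where
  "opt_sample_size loss h P X f = (LEAST n. LLR_guarantee loss h P X f n)"

datatype pidx = Wt nat nat nat | Bs nat nat
  \<comment> \<open>Wt l i j = W^[l]_{ij},  Bs l i = b^[l]_i\<close>

definition nn_pidx :: "(nat \<Rightarrow> nat) \<Rightarrow> nat \<Rightarrow> pidx set" where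
  "nn_pidx m L =
     {Wt l i j | l i j. 1 \<le> l \<and> l \<le> L \<and> i < m l \<and> j < m (l - 1)}
   \<union> {Bs l i | l i. 1 \<le> l \<and> l \<le> L \<and> i < m l}"

definition nn_nparams :: "(nat \<Rightarrow> nat) \<Rightarrow> nat \<Rightarrow> nat" where
  "nn_nparams m L = (\<Sum>l<L. (m l + 1) * m (Suc l))"

text \<open>Inputs x in R^d are represented as nat => real vanishing from coordinate d on.\<close>
definition input_dom :: "nat \<Rightarrow> (nat \<Rightarrow> real) set" where
  "input_dom d = {x. \<forall>j\<ge>d. x j = 0}"

fun nn_layer :: "(real \<Rightarrow> real) \<Rightarrow> (nat \<Rightarrow> nat) \<Rightarrow> (pidx \<Rightarrow> real) \<Rightarrow> (nat \<Rightarrow> real) \<Rightarrow> nat \<Rightarrow> (nat \<Rightarrow> real)" where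
  "nn_layer \<sigma> m \<theta> x 0 = x"
| "nn_layer \<sigma> m \<theta> x (Suc l) =
     (\<lambda>i. \<sigma> ((\<Sum>j<m l. \<theta> (Wt (Suc l) i j) * nn_layer \<sigma> m \<theta> x l j) + \<theta> (Bs (Suc l) i)))"

definition nn_out :: "(real \<Rightarrow> real) \<Rightarrow> (nat \<Rightarrow> nat) \<Rightarrow> nat \<Rightarrow> (pidx \<Rightarrow> real) \<Rightarrow> (nat \<Rightarrow> real) \<Rightarrow> real" where
  "nn_out \<sigma> m L \<theta> x =
     (\<Sum>j<m (L - 1). \<theta> (Wt L 0 j) * nn_layer \<sigma> m \<theta> x (L - 1) j) + \<theta> (Bs L 0)"

definition wider :: "(nat \<Rightarrow> nat) \<Rightarrow> (nat \<Rightarrow> nat) \<Rightarrow> nat \<Rightarrow> bool" where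
  "wider m' m L \<longleftrightarrow> m' 0 = m 0 \<and> m' L = m L \<and> (\<forall>l\<in>{1..L-1}. m l \<le> m' l)
     \<and> (\<Sum>l=1..L-1. (m' l - m l)) > 0"

end

theory Submission
  imports Defs
begin

text \<open>The loss vanishes exactly on the diagonal, so f* lies on every tangent hyperplane through a
point of the target set and has empirical loss 0 there. The minimisers are therefore the tangent
functions interpolating the data, and a dataset gives the LLR guarantee iff every tangent direction
vanishing at the sample points vanishes everywhere. A determining set of at most M points exists by
elimination, whence O(f*) \<le> M. Padding a narrow parameter with zeros keeps it in the target set of
the wide network, and there each wide partial derivative is a multiple of a narrow one: along old
parameters they agree, along parameters of a new neuron they vanish (its outgoing weights are zero),
and a weight leaving a new neuron, whose output is the constant \<sigma>(0), acts as \<sigma>(0) times the bias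
of the neuron it feeds. So the wide tangent directions lie in the span of the narrow ones, and a
determining set for the narrow network also determines the wide one.\<close>

section \<open>Linearised regression on a tangent hyperplane\<close>

definition determining_set :: "'x set \<Rightarrow> 'x set \<Rightarrow> 'i set \<Rightarrow> ('i \<Rightarrow> 'x \<Rightarrow> real) \<Rightarrow> bool" where
  "determining_set S X P g \<longleftrightarrow>
     (\<forall>a. (\<forall>x\<in>S. (\<Sum>i\<in>P. a i * g i x) = 0) \<longrightarrow> (\<forall>x\<in>X. (\<Sum>i\<in>P. a i * g i x) = 0))"

definition in_span_on :: "'x set \<Rightarrow> 'i set \<Rightarrow> ('i \<Rightarrow> 'x \<Rightarrow> real) \<Rightarrow> ('x \<Rightarrow> real) \<Rightarrow> bool" where
  "in_span_on X P g u \<longleftrightarrow> (\<exists>b. \<forall>x\<in>X. u x = (\<Sum>i\<in>P. b i * g i x))"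

lemma in_span_on_zero: "in_span_on X P g (\<lambda>x. 0)"
  unfolding in_span_on_def by (intro exI[of _ "\<lambda>_. 0"]) simp

lemma in_span_on_scaled_generator:
  assumes "finite P" and "j \<in> P"
  shows "in_span_on X P g (\<lambda>x. c * g j x)"
  unfolding in_span_on_def
proof (intro exI[of _ "\<lambda>i. if i = j then c else 0"] ballI)
  fix x
  have "(\<Sum>i\<in>P. (if i = j then c else 0) * g i x) = (\<Sum>i\<in>P. if i = j then c * g j x else 0)"
    by (rule sum.cong) auto
  then show "c * g j x = (\<Sum>i\<in>P. (if i = j then c else 0) * g i x)" using assms by simp
qed

lemma determining_set_of_in_span:
  assumes det: "determining_set S X P g" and "S \<subseteq> X"
    and span: "\<forall>j\<in>Q. in_span_on X P g (g' j)"
  shows "determining_set S X Q g'"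
  unfolding determining_set_def
proof (intro allI impI)
  obtain b where b: "\<forall>j\<in>Q. \<forall>x\<in>X. g' j x = (\<Sum>i\<in>P. b j i * g i x)"
    using span unfolding in_span_on_def by metis
  fix a
  define c where "c i = (\<Sum>j\<in>Q. a j * b j i)" for i
  have comb: "(\<Sum>j\<in>Q. a j * g' j x) = (\<Sum>i\<in>P. c i * g i x)" if "x \<in> X" for x
  proof -
    have "(\<Sum>j\<in>Q. a j * g' j x) = (\<Sum>j\<in>Q. \<Sum>i\<in>P. a j * b j i * g i x)"
      using b that by (simp add: sum_distrib_left mult.assoc)
    also have "\<dots> = (\<Sum>i\<in>P. c i * g i x)"
      by (subst sum.swap) (simp add: c_def sum_distrib_right)
    finally show ?thesis .
  qed
  assume "\<forall>x\<in>S. (\<Sum>j\<in>Q. a j * g' j x) = 0"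
  with comb \<open>S \<subseteq> X\<close> have "\<forall>x\<in>S. (\<Sum>i\<in>P. c i * g i x) = 0" by (metis subsetD)
  with det have "\<forall>x\<in>X. (\<Sum>i\<in>P. c i * g i x) = 0" unfolding determining_set_def by blast
  with comb show "\<forall>x\<in>X. (\<Sum>j\<in>Q. a j * g' j x) = 0" by simp
qed

lemma exists_determining_set:
  assumes "finite P"
  shows "\<exists>S\<subseteq>X. finite S \<and> card S \<le> card P \<and> determining_set S X P g"
  using assms
proof (induction P arbitrary: g rule: finite_induct)
  case empty
  then show ?case by (intro exI[of _ "{}"]) (simp add: determining_set_def)
next
  case (insert p P)
  show ?case
  proof (cases "\<forall>x\<in>X. g p x = 0")
    case True
    obtain S where S: "S \<subseteq> X" "finite S" "card S \<le> card P" "determining_set S X P g"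
      using insert.IH by blast
    have "determining_set S X (insert p P) g"
      unfolding determining_set_def
    proof (intro allI impI)
      fix a assume "\<forall>x\<in>S. (\<Sum>i\<in>insert p P. a i * g i x) = 0"
      moreover have "\<forall>x\<in>S. g p x = 0" using True S(1) by blast
      ultimately have "\<forall>x\<in>S. (\<Sum>i\<in>P. a i * g i x) = 0" using insert.hyps by simp
      with S(4) have "\<forall>x\<in>X. (\<Sum>i\<in>P. a i * g i x) = 0" unfolding determining_set_def by blast
      with True insert.hyps show "\<forall>x\<in>X. (\<Sum>i\<in>insert p P. a i * g i x) = 0" by simp
    qed
    with S insert.hyps show ?thesis by (intro exI[of _ S]) auto
  next
    case False
    then obtain x0 where x0: "x0 \<in> X" "g p x0 \<noteq> 0" by blast
    \<comment> \<open>Gaussian elimination of the coefficient of p by means of the constraint at x0.\<close>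
    define g' where "g' i x = g i x - g i x0 / g p x0 * g p x" for i x
    obtain S where S: "S \<subseteq> X" "finite S" "card S \<le> card P" "determining_set S X P g'"
      using insert.IH by blast
    have eliminate: "(\<Sum>i\<in>insert p P. a i * g i x) = (\<Sum>i\<in>P. a i * g' i x)"
      if "(\<Sum>i\<in>insert p P. a i * g i x0) = 0" for a x
    proof -
      have at_x0: "(\<Sum>i\<in>P. a i * g i x0) = - a p * g p x0" using that insert.hyps by simp
      have "(\<Sum>i\<in>P. a i * g' i x)
          = (\<Sum>i\<in>P. a i * g i x) - (\<Sum>i\<in>P. a i * g i x0) / g p x0 * g p x"
        unfolding g'_def
        by (simp add: algebra_simps sum_subtractf sum_distrib_right sum_distrib_left sum_divide_distrib)
      also have "\<dots> = (\<Sum>i\<in>P. a i * g i x) + a p * g p x" using x0(2) by (simp add: at_x0)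
      finally show ?thesis using insert.hyps by simp
    qed
    have "determining_set (insert x0 S) X (insert p P) g"
      unfolding determining_set_def
    proof (intro allI impI)
      fix a assume vanish: "\<forall>x\<in>insert x0 S. (\<Sum>i\<in>insert p P. a i * g i x) = 0"
      then have at_x0: "(\<Sum>i\<in>insert p P. a i * g i x0) = 0" by simp
      with vanish have "\<forall>x\<in>S. (\<Sum>i\<in>P. a i * g' i x) = 0" using eliminate by simp
      then show "\<forall>x\<in>X. (\<Sum>i\<in>insert p P. a i * g i x) = 0"
        using S(4) eliminate[OF at_x0] unfolding determining_set_def by simp
    qed
    with S x0 insert.hyps show ?thesis
      by (intro exI[of _ "insert x0 S"]) (auto simp: card_insert_if)
  qed
qed

lemma opt_sample_size_le:
  "LLR_guarantee loss h P X f n \<Longrightarrow> opt_sample_size loss h P X f \<le> n"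
  unfolding opt_sample_size_def by (rule Least_le)

lemma LLR_guarantee_opt_sample_size:
  "LLR_guarantee loss h P X f n \<Longrightarrow> LLR_guarantee loss h P X f (opt_sample_size loss h P X f)"
  unfolding opt_sample_size_def by (rule LeastI)

context
  fixes loss :: "real \<Rightarrow> real \<Rightarrow> real"
  assumes loss_nonneg: "\<And>u v. loss u v \<ge> 0"
    and loss_zero: "\<And>u v. loss u v = 0 \<longleftrightarrow> u = v"
begin

lemma emp_loss_nonneg: "emp_loss loss xs f u \<ge> 0"
  unfolding emp_loss_def using loss_nonneg by (auto intro!: divide_nonneg_nonneg sum_list_nonneg)

lemma emp_loss_eq_0_iff: "emp_loss loss xs f u = 0 \<longleftrightarrow> (\<forall>x\<in>set xs. u x = f x)"
proof (cases "xs = []")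
  case False
  have "sum_list (map (\<lambda>x. loss (u x) (f x)) xs) = 0 \<longleftrightarrow> (\<forall>x\<in>set xs. u x = f x)"
    by (subst sum_list_nonneg_eq_0_iff) (use loss_nonneg loss_zero in auto)
  with False show ?thesis unfolding emp_loss_def by simp
qed (simp add: emp_loss_def)

lemma tangent_minimizers_iff_determining_set:
  assumes xs: "set xs \<subseteq> X" and \<theta>': "\<theta>' \<in> target_set h P X f"
  shows "(\<forall>u\<in>tangent_hyperplane h P X \<theta>'.
            (\<forall>v\<in>tangent_hyperplane h P X \<theta>'. emp_loss loss xs f u \<le> emp_loss loss xs f v)
            \<longleftrightarrow> (\<forall>x\<in>X. u x = f x))
    \<longleftrightarrow> determining_set (set xs) X P (\<lambda>i. param_partial h i \<theta>')"
    (is "?minimizers \<longleftrightarrow> _")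
proof -
  let ?T = "tangent_hyperplane h P X \<theta>'" and ?E = "emp_loss loss xs f"
  let ?d = "\<lambda>a x. \<Sum>i\<in>P. a i * param_partial h i \<theta>' x"
  have "\<forall>x\<in>X. h \<theta>' x = f x" using \<theta>' by (simp add: target_set_def)
  then have tangent: "u \<in> ?T \<longleftrightarrow> (\<exists>a. \<forall>x\<in>X. u x = f x + ?d a x)" for u
    by (simp add: tangent_hyperplane_def)
  have f_tangent: "f \<in> ?T" by (subst tangent) (auto intro!: exI[of _ "\<lambda>_. 0"])
  have minimizer: "(\<forall>v\<in>?T. ?E u \<le> ?E v) \<longleftrightarrow> (\<forall>x\<in>set xs. u x = f x)" for u
  proof
    assume "\<forall>v\<in>?T. ?E u \<le> ?E v"
    then have "?E u \<le> ?E f" using f_tangent by (rule bspec)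
    also have "?E f = 0" by (rule emp_loss_eq_0_iff[THEN iffD2]) simp
    finally have "?E u = 0" using emp_loss_nonneg[of xs f u] by linarith
    then show "\<forall>x\<in>set xs. u x = f x" by (simp add: emp_loss_eq_0_iff)
  next
    assume "\<forall>x\<in>set xs. u x = f x"
    then have "?E u = 0" by (simp add: emp_loss_eq_0_iff)
    then show "\<forall>v\<in>?T. ?E u \<le> ?E v" by (simp add: emp_loss_nonneg)
  qed
  show ?thesis
  proof
    assume ?minimizers
    show "determining_set (set xs) X P (\<lambda>i. param_partial h i \<theta>')"
      unfolding determining_set_def
    proof (intro allI impI)
      fix a assume "\<forall>x\<in>set xs. ?d a x = 0"
      moreover have "(\<lambda>x. f x + ?d a x) \<in> ?T" using tangent by blast
      ultimately have "\<forall>x\<in>X. f x + ?d a x = f x" using \<open>?minimizers\<close> minimizer by auto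
      then show "\<forall>x\<in>X. ?d a x = 0" by simp
    qed
  next
    assume det: "determining_set (set xs) X P (\<lambda>i. param_partial h i \<theta>')"
    show ?minimizers
    proof
      fix u assume "u \<in> ?T"
      then obtain a where a: "\<forall>x\<in>X. u x = f x + ?d a x" using tangent by blast
      have "(\<forall>x\<in>set xs. u x = f x) \<longleftrightarrow> (\<forall>x\<in>X. u x = f x)"
        using det xs a unfolding determining_set_def by (auto simp: subset_iff)
      then show "(\<forall>v\<in>?T. ?E u \<le> ?E v) \<longleftrightarrow> (\<forall>x\<in>X. u x = f x)" using minimizer by simp
    qed
  qed
qed

lemma LLR_guarantee_iff_determining_set:
  "LLR_guarantee loss h P X f n \<longleftrightarrow>
    (\<exists>xs. length xs = n \<and> set xs \<subseteq> X \<and>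
       (\<exists>\<theta>'\<in>target_set h P X f. determining_set (set xs) X P (\<lambda>i. param_partial h i \<theta>')))"
  unfolding LLR_guarantee_def
  by (intro ex_cong1 conj_cong refl bex_cong)
    (rule tangent_minimizers_iff_determining_set; assumption)

lemma LLR_guarantee_exists:
  assumes "finite P" and \<theta>': "\<theta>' \<in> target_set h P X f"
  shows "\<exists>n\<le>card P. LLR_guarantee loss h P X f n"
proof -
  obtain S where S: "S \<subseteq> X" "finite S" "card S \<le> card P"
    and det: "determining_set S X P (\<lambda>i. param_partial h i \<theta>')"
    using exists_determining_set[OF \<open>finite P\<close>, where X = X and g = "\<lambda>i. param_partial h i \<theta>'"]
    by blast
  obtain xs where "set xs = S" "distinct xs" using finite_distinct_list[OF S(2)] by blast
  have "LLR_guarantee loss h P X f (length xs)"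
    unfolding LLR_guarantee_iff_determining_set
    using S(1) det \<theta>' \<open>set xs = S\<close> by (intro exI[of _ xs] conjI bexI[of _ \<theta>']) auto
  with S \<open>set xs = S\<close> \<open>distinct xs\<close> show ?thesis by (metis distinct_card)
qed

lemma LLR_guarantee_of_tangent_span:
  assumes target: "\<And>\<theta>. \<theta> \<in> target_set h P X f \<Longrightarrow> \<theta> \<in> target_set h' Q X f"
    and span: "\<And>\<theta> j. \<theta> \<in> target_set h P X f \<Longrightarrow> j \<in> Q \<Longrightarrow>
                 in_span_on X P (\<lambda>i. param_partial h i \<theta>) (param_partial h' j \<theta>)"
    and "LLR_guarantee loss h P X f n"
  shows "LLR_guarantee loss h' Q X f n"
proof -
  obtain xs \<theta>' where xs: "length xs = n" "set xs \<subseteq> X" and \<theta>': "\<theta>' \<in> target_set h P X f"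
    and det: "determining_set (set xs) X P (\<lambda>i. param_partial h i \<theta>')"
    using assms(3) unfolding LLR_guarantee_iff_determining_set by blast
  have "determining_set (set xs) X Q (\<lambda>j. param_partial h' j \<theta>')"
    by (rule determining_set_of_in_span[OF det xs(2)]) (use span[OF \<theta>'] in blast)
  then show ?thesis
    unfolding LLR_guarantee_iff_determining_set
    using xs target[OF \<theta>'] by (intro exI[of _ xs] conjI bexI[of _ \<theta>']) auto
qed

end

section \<open>Fully-connected networks\<close>

lemma nn_pidx_Wt_iff [simp]:
  "Wt l i j \<in> nn_pidx m L \<longleftrightarrow> 1 \<le> l \<and> l \<le> L \<and> i < m l \<and> j < m (l - 1)"
  by (auto simp: nn_pidx_def)

lemma nn_pidx_Bs_iff [simp]: "Bs l i \<in> nn_pidx m L \<longleftrightarrow> 1 \<le> l \<and> l \<le> L \<and> i < m l"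
  by (auto simp: nn_pidx_def)

fun param_layer :: "pidx \<Rightarrow> nat" where
  "param_layer (Wt l i j) = l"
| "param_layer (Bs l i) = l"

fun param_neuron :: "pidx \<Rightarrow> nat" where
  "param_neuron (Wt l i j) = i"
| "param_neuron (Bs l i) = i"

lemma nn_pidx_layer_neuron:
  assumes "q \<in> nn_pidx m L"
  shows "1 \<le> param_layer q \<and> param_layer q \<le> L \<and> param_neuron q < m (param_layer q)"
  using assms by (cases q) auto

lemma nn_pidx_mono:
  assumes "\<And>l. l \<le> L \<Longrightarrow> m l \<le> m' l"
  shows "nn_pidx m L \<subseteq> nn_pidx m' L"
proof
  fix q assume q: "q \<in> nn_pidx m L"
  show "q \<in> nn_pidx m' L"
  proof (cases q)
    case (Wt l i j)
    with q have "l \<le> L" "l - 1 \<le> L" by auto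
    with Wt q assms[of l] assms[of "l - 1"] show ?thesis by auto
  next
    case (Bs l i)
    with q assms[of l] show ?thesis by auto
  qed
qed

lemma finite_card_nn_pidx: "finite (nn_pidx m L) \<and> card (nn_pidx m L) \<le> nn_nparams m L"
proof -
  define A where
    "A l = (\<lambda>(i, j). Wt (Suc l) i j) ` ({..<m (Suc l)} \<times> {..<m l}) \<union> Bs (Suc l) ` {..<m (Suc l)}" for l
  have sub: "nn_pidx m L \<subseteq> (\<Union>l<L. A l)"
  proof
    fix q assume q: "q \<in> nn_pidx m L"
    then have "param_layer q - 1 < L" and "q \<in> A (param_layer q - 1)"
      by (cases q; force simp: A_def)+
    then show "q \<in> (\<Union>l<L. A l)" by blast
  qed
  have card_A: "card (A l) \<le> (m l + 1) * m (Suc l)" for l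
  proof -
    have "card (A l) \<le> card ({..<m (Suc l)} \<times> {..<m l}) + card {..<m (Suc l)}"
      unfolding A_def by (intro card_Un_le[THEN order_trans] add_mono card_image_le) auto
    then show ?thesis by (simp add: algebra_simps)
  qed
  have fin: "finite (\<Union>l<L. A l)" by (auto simp: A_def)
  have "card (nn_pidx m L) \<le> (\<Sum>l<L. card (A l))"
    using card_mono[OF fin sub] card_UN_le[of "{..<L}" A] by simp
  also have "\<dots> \<le> nn_nparams m L" unfolding nn_nparams_def by (rule sum_mono[OF card_A])
  finally show ?thesis using finite_subset[OF sub fin] by simp
qed

definition nn_preact ::
    "(real \<Rightarrow> real) \<Rightarrow> (nat \<Rightarrow> nat) \<Rightarrow> (pidx \<Rightarrow> real) \<Rightarrow> (nat \<Rightarrow> real) \<Rightarrow> nat \<Rightarrow> nat \<Rightarrow> real"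
  where "nn_preact \<sigma> m \<theta> x l i =
    (\<Sum>j<m (l - 1). \<theta> (Wt l i j) * nn_layer \<sigma> m \<theta> x (l - 1) j) + \<theta> (Bs l i)"

lemma nn_layer_Suc_preact: "nn_layer \<sigma> m \<theta> x (Suc l) i = \<sigma> (nn_preact \<sigma> m \<theta> x (Suc l) i)"
  by (simp add: nn_preact_def)

lemma nn_out_preact: "nn_out \<sigma> m L \<theta> x = nn_preact \<sigma> m \<theta> x L 0"
  by (simp add: nn_preact_def nn_out_def)

lemma nn_layer_cong_params:
  assumes "\<And>q. param_layer q \<le> k \<Longrightarrow> \<theta>1 q = \<theta>2 q"
  shows "nn_layer \<sigma> m \<theta>1 x k = nn_layer \<sigma> m \<theta>2 x k"
  using assms
proof (induction k)
  case (Suc k)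
  then have "nn_layer \<sigma> m \<theta>1 x k = nn_layer \<sigma> m \<theta>2 x k" by simp
  with Suc.prems show ?case by (intro ext) simp
qed simp

lemma nn_out_eq_of_preact_eq:
  assumes "1 \<le> k" "k \<le> L"
    and later: "\<And>q. k < param_layer q \<Longrightarrow> \<theta>1 q = \<theta>2 q"
    and preact: "\<And>i. nn_preact \<sigma> m \<theta>1 x k i = nn_preact \<sigma> m \<theta>2 x k i"
  shows "nn_out \<sigma> m L \<theta>1 x = nn_out \<sigma> m L \<theta>2 x"
proof -
  have "nn_preact \<sigma> m \<theta>1 x j i = nn_preact \<sigma> m \<theta>2 x j i" if "k \<le> j" for j i
    using that
  proof (induction j arbitrary: i rule: dec_induct)
    case (step j)
    from \<open>1 \<le> k\<close> \<open>k \<le> j\<close> obtain j' where j': "j = Suc j'" by (cases j) auto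
    have "nn_layer \<sigma> m \<theta>1 x j = nn_layer \<sigma> m \<theta>2 x j"
      unfolding j' nn_layer_Suc_preact step.IH[unfolded j'] ..
    moreover have "\<theta>1 (Wt (Suc j) i j'') = \<theta>2 (Wt (Suc j) i j'')" "\<theta>1 (Bs (Suc j) i) = \<theta>2 (Bs (Suc j) i)"
      for i j'' using later step.hyps by auto
    ultimately show ?case by (simp add: nn_preact_def)
  qed (rule preact)
  with \<open>k \<le> L\<close> show ?thesis by (simp add: nn_out_preact)
qed

lemma nn_layer_narrow:
  assumes "\<And>l. l \<le> L \<Longrightarrow> m l \<le> m' l" and \<theta>: "\<theta> \<in> param_space (nn_pidx m L)"
  shows "k \<le> L \<Longrightarrow> nn_layer \<sigma> m' \<theta> x k = nn_layer \<sigma> m \<theta> x k"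
proof (induction k)
  case (Suc k)
  have "(\<Sum>j<m' k. \<theta> (Wt (Suc k) i j) * nn_layer \<sigma> m \<theta> x k j)
      = (\<Sum>j<m k. \<theta> (Wt (Suc k) i j) * nn_layer \<sigma> m \<theta> x k j)" for i
    using assms(1)[of k] Suc.prems \<theta>
    by (intro sum.mono_neutral_right) (auto simp: param_space_def)
  with Suc show ?case by (intro ext) simp
qed simp

lemma nn_out_narrow:
  assumes "\<And>l. l \<le> L \<Longrightarrow> m l \<le> m' l" and \<theta>: "\<theta> \<in> param_space (nn_pidx m L)"
  shows "nn_out \<sigma> m' L \<theta> x = nn_out \<sigma> m L \<theta> x"
proof -
  have "(\<Sum>j<m' (L - 1). \<theta> (Wt L 0 j) * nn_layer \<sigma> m \<theta> x (L - 1) j)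
      = (\<Sum>j<m (L - 1). \<theta> (Wt L 0 j) * nn_layer \<sigma> m \<theta> x (L - 1) j)"
    using assms(1)[of "L - 1"] \<theta>
    by (intro sum.mono_neutral_right) (auto simp: param_space_def)
  then show ?thesis
    using nn_layer_narrow[where m = m and m' = m' and L = L, OF assms, of "L - 1"]
    by (simp add: nn_out_def)
qed

lemma nn_layer_perturb_differentiable:
  assumes "\<And>z. \<sigma> differentiable (at z)"
  shows "(\<lambda>s. nn_layer \<sigma> m (\<theta>(q := \<theta> q + s)) x k j) differentiable (at s0)"
proof (induction k arbitrary: j)
  case (Suc k)
  have "(\<lambda>s. (\<theta>(q := \<theta> q + s)) r) differentiable (at s0)" for r
    by (cases "r = q") simp_all
  with Suc show ?case
    by (simp only: nn_layer.simps)
      (intro differentiable_compose[where f = \<sigma>, OF assms] differentiable_add differentiable_sum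
        differentiable_mult ballI finite_lessThan)
qed simp

lemma nn_out_perturb_differentiable:
  assumes "\<And>z. \<sigma> differentiable (at z)"
  shows "(\<lambda>s. nn_out \<sigma> m L (\<theta>(q := \<theta> q + s)) x) differentiable (at s0)"
proof -
  have "(\<lambda>s. (\<theta>(q := \<theta> q + s)) r) differentiable (at s0)" for r
    by (cases "r = q") simp_all
  then show ?thesis
    unfolding nn_out_def
    by (intro differentiable_add differentiable_sum differentiable_mult ballI finite_lessThan
        nn_layer_perturb_differentiable[OF assms])
qed

lemma deriv_scaled_arg:
  fixes g :: "real \<Rightarrow> real"
  assumes "g differentiable (at 0)"
  shows "deriv (\<lambda>t. g (c * t)) 0 = c * deriv g 0"
proof -
  have "(g has_field_derivative deriv g 0) (at (c * 0))"
    using assms DERIV_deriv_iff_real_differentiable by simp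
  then have "((g \<circ> (\<lambda>t. c * t)) has_field_derivative deriv g 0 * c) (at 0)"
    by (rule DERIV_chain) (auto intro!: derivative_eq_intros)
  then show ?thesis by (simp add: o_def DERIV_imp_deriv mult.commute)
qed

lemma param_partial_eq_scaled:
  assumes same: "\<And>t. h (\<theta>(i := \<theta> i + t)) x = h (\<theta>(j := \<theta> j + c * t)) x"
    and "(\<lambda>s. h (\<theta>(j := \<theta> j + s)) x) differentiable (at 0)"
  shows "param_partial h i \<theta> x = c * param_partial h j \<theta> x"
  using deriv_scaled_arg[OF assms(2), of c] by (simp add: param_partial_def same)

lemma param_partial_narrow:
  assumes "\<And>l. l \<le> L \<Longrightarrow> m l \<le> m' l" and "\<theta> \<in> param_space (nn_pidx m L)"
    and "q \<in> nn_pidx m L"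
  shows "param_partial (nn_out \<sigma> m' L) q \<theta> x = param_partial (nn_out \<sigma> m L) q \<theta> x"
proof -
  have "\<theta>(q := \<theta> q + t) \<in> param_space (nn_pidx m L)" for t
    using assms(2,3) by (auto simp: param_space_def)
  then show ?thesis
    using nn_out_narrow[where m = m and m' = m' and L = L, OF assms(1)]
    by (simp add: param_partial_def)
qed

lemma param_partial_dead_neuron:
  assumes layer: "param_layer q = Suc l" "Suc l < L"
    and dead: "\<And>i. \<theta> (Wt (Suc (Suc l)) i (param_neuron q)) = 0"
  shows "param_partial (nn_out \<sigma> m L) q \<theta> x = 0"
proof -
  let ?a = "param_neuron q"
  have "nn_out \<sigma> m L (\<theta>(q := \<theta> q + t)) x = nn_out \<sigma> m L \<theta> x" for t
  proof -
    let ?\<theta>t = "\<theta>(q := \<theta> q + t)"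
    have below: "nn_layer \<sigma> m ?\<theta>t x l = nn_layer \<sigma> m \<theta> x l"
      by (rule nn_layer_cong_params) (use layer in auto)
    have other_neurons: "nn_layer \<sigma> m ?\<theta>t x (Suc l) j = nn_layer \<sigma> m \<theta> x (Suc l) j" if "j \<noteq> ?a" for j
    proof -
      have "Wt (Suc l) j j' \<noteq> q" "Bs (Suc l) j \<noteq> q" for j' using that by (cases q; auto)+
      then show ?thesis by (simp add: below)
    qed
    have "nn_preact \<sigma> m ?\<theta>t x (Suc (Suc l)) i = nn_preact \<sigma> m \<theta> x (Suc (Suc l)) i" for i
    proof -
      have "Wt (Suc (Suc l)) i j \<noteq> q" "Bs (Suc (Suc l)) i \<noteq> q" for j using layer by (cases q; auto)+
      moreover have "(\<Sum>j<m (Suc l). \<theta> (Wt (Suc (Suc l)) i j) * nn_layer \<sigma> m ?\<theta>t x (Suc l) j)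
          = (\<Sum>j<m (Suc l). \<theta> (Wt (Suc (Suc l)) i j) * nn_layer \<sigma> m \<theta> x (Suc l) j)"
      proof (rule sum.cong)
        fix j
        show "\<theta> (Wt (Suc (Suc l)) i j) * nn_layer \<sigma> m ?\<theta>t x (Suc l) j
            = \<theta> (Wt (Suc (Suc l)) i j) * nn_layer \<sigma> m \<theta> x (Suc l) j"
          using dead[of i] other_neurons[of j] by (cases "j = ?a") auto
      qed simp
      ultimately show ?thesis by (simp add: nn_preact_def)
    qed
    then show ?thesis by (rule nn_out_eq_of_preact_eq[rotated 3]) (use layer in auto)
  qed
  then show ?thesis by (simp add: param_partial_def)
qed

lemma param_partial_weight_eq_bias:
  assumes "\<And>z. \<sigma> differentiable (at z)" and l: "1 \<le> l" "l \<le> L" and "b < m (l - 1)"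
  shows "param_partial (nn_out \<sigma> m L) (Wt l a b) \<theta> x
    = nn_layer \<sigma> m \<theta> x (l - 1) b * param_partial (nn_out \<sigma> m L) (Bs l a) \<theta> x"
proof (rule param_partial_eq_scaled)
  let ?y = "nn_layer \<sigma> m \<theta> x (l - 1)"
  fix t
  let ?\<theta>w = "\<theta>(Wt l a b := \<theta> (Wt l a b) + t)" and ?\<theta>b = "\<theta>(Bs l a := \<theta> (Bs l a) + ?y b * t)"
  have w_below: "nn_layer \<sigma> m ?\<theta>w x (l - 1) = ?y"
    by (rule nn_layer_cong_params) (use l in auto)
  have b_below: "nn_layer \<sigma> m ?\<theta>b x (l - 1) = ?y"
    by (rule nn_layer_cong_params) (use l in auto)
  have "nn_preact \<sigma> m ?\<theta>w x l i = nn_preact \<sigma> m ?\<theta>b x l i" for i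
  proof (cases "i = a")
    case True
    have "(\<Sum>j<m (l - 1). ?\<theta>w (Wt l a j) * ?y j)
        = (\<Sum>j<m (l - 1). \<theta> (Wt l a j) * ?y j + (if j = b then t * ?y j else 0))"
      by (rule sum.cong) (auto simp: algebra_simps)
    also have "\<dots> = (\<Sum>j<m (l - 1). \<theta> (Wt l a j) * ?y j) + ?y b * t"
      using \<open>b < m (l - 1)\<close> by (simp add: sum.distrib mult.commute)
    finally show ?thesis using True unfolding nn_preact_def w_below b_below by simp
  next
    case False
    then show ?thesis unfolding nn_preact_def w_below b_below by simp
  qed
  then show "nn_out \<sigma> m L ?\<theta>w x = nn_out \<sigma> m L ?\<theta>b x"
    by (rule nn_out_eq_of_preact_eq[rotated 3]) (use l in auto)
qed (rule nn_out_perturb_differentiable[OF assms(1)])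

lemma nn_layer_new_neuron:
  assumes "\<theta> \<in> param_space (nn_pidx m L)" and "m (Suc k) \<le> b"
  shows "nn_layer \<sigma> m' \<theta> x (Suc k) b = \<sigma> 0"
proof -
  have "\<theta> (Wt (Suc k) b j) = 0" "\<theta> (Bs (Suc k) b) = 0" for j
    using assms by (auto simp: param_space_def)
  then show ?thesis by simp
qed

lemma wider_le:
  assumes "wider m' m L" and "l \<le> L"
  shows "m l \<le> m' l"
proof (cases "l = 0 \<or> l = L")
  case True
  with assms show ?thesis by (auto simp: wider_def)
next
  case False
  with assms(2) have "l \<in> {1..L - 1}" by auto
  with assms(1) show ?thesis unfolding wider_def by blast
qed

lemma target_set_nn_mono:
  assumes mle: "\<And>l. l \<le> L \<Longrightarrow> m l \<le> m' l" and \<theta>: "\<theta> \<in> target_set (nn_out \<sigma> m L) (nn_pidx m L) X f"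
  shows "\<theta> \<in> target_set (nn_out \<sigma> m' L) (nn_pidx m' L) X f"
proof -
  have narrow_params: "\<theta> \<in> param_space (nn_pidx m L)" and fits: "\<forall>x\<in>X. nn_out \<sigma> m L \<theta> x = f x"
    using \<theta> by (simp_all add: target_set_def)
  then have "\<theta> \<in> param_space (nn_pidx m' L)"
    using nn_pidx_mono[where m = m and m' = m' and L = L, OF mle] by (auto simp: param_space_def)
  with fits show ?thesis
    by (simp add: target_set_def nn_out_narrow[where m = m and m' = m' and L = L, OF mle narrow_params])
qed

lemma param_partial_new_neuron:
  assumes "m' L = m L" and \<theta>: "\<theta> \<in> param_space (nn_pidx m L)"
    and q: "q \<in> nn_pidx m' L" and new: "m (param_layer q) \<le> param_neuron q"
  shows "param_partial (nn_out \<sigma> m' L) q \<theta> x = 0"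
proof -
  have "param_layer q \<noteq> L"
    using nn_pidx_layer_neuron[OF q] new \<open>m' L = m L\<close> by (metis not_less)
  with nn_pidx_layer_neuron[OF q] obtain l where l: "param_layer q = Suc l" "Suc l < L"
    by (cases "param_layer q") auto
  have "\<theta> (Wt (Suc (Suc l)) i (param_neuron q)) = 0" for i
    using \<theta> new l by (auto simp: param_space_def)
  then show ?thesis by (rule param_partial_dead_neuron[OF l])
qed

lemma param_partial_weight_from_new_neuron:
  assumes "\<And>z. \<sigma> differentiable (at z)" and mle: "\<And>l. l \<le> L \<Longrightarrow> m l \<le> m' l"
    and "m' 0 = m 0" and \<theta>: "\<theta> \<in> param_space (nn_pidx m L)"
    and q: "Wt l a b \<in> nn_pidx m' L" and "a < m l" and "m (l - 1) \<le> b"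
  shows "param_partial (nn_out \<sigma> m' L) (Wt l a b) \<theta> x
    = \<sigma> 0 * param_partial (nn_out \<sigma> m L) (Bs l a) \<theta> x"
proof -
  from q have l: "1 \<le> l" "l \<le> L" "b < m' (l - 1)" by auto
  with \<open>m (l - 1) \<le> b\<close> \<open>m' 0 = m 0\<close> obtain k where k: "l - 1 = Suc k" by (cases "l - 1") auto
  have bias: "Bs l a \<in> nn_pidx m L" using l \<open>a < m l\<close> by simp
  have new_output: "nn_layer \<sigma> m' \<theta> x (l - 1) b = \<sigma> 0"
    unfolding k by (rule nn_layer_new_neuron[OF \<theta>]) (use \<open>m (l - 1) \<le> b\<close> k in simp)
  have "param_partial (nn_out \<sigma> m' L) (Wt l a b) \<theta> x
      = \<sigma> 0 * param_partial (nn_out \<sigma> m' L) (Bs l a) \<theta> x"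
    unfolding new_output[symmetric] by (rule param_partial_weight_eq_bias[where m = m', OF assms(1) l])
  also have "\<dots> = \<sigma> 0 * param_partial (nn_out \<sigma> m L) (Bs l a) \<theta> x"
    using param_partial_narrow[where m = m and m' = m' and L = L, OF mle \<theta> bias] by simp
  finally show ?thesis .
qed

lemma wide_param_partial_in_span:
  assumes "\<And>z. \<sigma> differentiable (at z)" and mle: "\<And>l. l \<le> L \<Longrightarrow> m l \<le> m' l"
    and "m' 0 = m 0" and "m' L = m L"
    and \<theta>: "\<theta> \<in> param_space (nn_pidx m L)" and q: "q \<in> nn_pidx m' L"
  shows "in_span_on X (nn_pidx m L) (\<lambda>i. param_partial (nn_out \<sigma> m L) i \<theta>)
           (param_partial (nn_out \<sigma> m' L) q \<theta>)"
proof -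
  let ?g = "\<lambda>i. param_partial (nn_out \<sigma> m L) i \<theta>"
  have fin: "finite (nn_pidx m L)" using finite_card_nn_pidx by blast
  consider (old) "q \<in> nn_pidx m L" | (new_neuron) "m (param_layer q) \<le> param_neuron q"
    | (from_new_neuron) l a b where "q = Wt l a b" "a < m l" "m (l - 1) \<le> b"
    using q by (cases q) (fastforce simp: not_le)+
  then show ?thesis
  proof cases
    case old
    have "param_partial (nn_out \<sigma> m' L) q \<theta> = ?g q"
      by (rule ext) (rule param_partial_narrow[where m = m and m' = m' and L = L, OF mle \<theta> old])
    with in_span_on_scaled_generator[OF fin old, of X ?g 1] show ?thesis by simp
  next
    case new_neuron
    have "param_partial (nn_out \<sigma> m' L) q \<theta> = (\<lambda>x. 0)"
      by (rule ext) (rule param_partial_new_neuron[OF \<open>m' L = m L\<close> \<theta> q new_neuron])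
    then show ?thesis by (simp add: in_span_on_zero)
  next
    case (from_new_neuron l a b)
    then have "Bs l a \<in> nn_pidx m L" using q by simp
    moreover have "param_partial (nn_out \<sigma> m' L) q \<theta> = (\<lambda>x. \<sigma> 0 * ?g (Bs l a) x)"
      using from_new_neuron q
      by (intro ext) (simp add: param_partial_weight_from_new_neuron[OF assms(1) mle \<open>m' 0 = m 0\<close> \<theta>])
    ultimately show ?thesis using in_span_on_scaled_generator[OF fin, of "Bs l a" X ?g "\<sigma> 0"] by simp
  qed
qed

theorem mainTheorem11:
  fixes \<sigma> :: "real \<Rightarrow> real" and loss :: "real \<Rightarrow> real \<Rightarrow> real"
    and m m' :: "nat \<Rightarrow> nat" and L :: nat and fstar :: "(nat \<Rightarrow> real) \<Rightarrow> real"
  assumes sigma_diff: "\<And>z. \<sigma> differentiable (at z)"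
    and loss_C1: "\<exists>D1 D2. continuous_on UNIV D1 \<and> continuous_on UNIV D2 \<and>
          (\<forall>z. ((\<lambda>p. loss (fst p) (snd p)) has_derivative
                 (\<lambda>q. D1 z * fst q + D2 z * snd q)) (at z))"
    and loss_nonneg: "\<And>u v. loss u v \<ge> 0"
    and loss_zero: "\<And>u v. loss u v = 0 \<longleftrightarrow> u = v"
    and L2: "L \<ge> 2"
    and out1: "m L = 1" "m' L = 1"
    and wide: "wider m' m L"
    and fstar_in: "in_fun_space (nn_out \<sigma> m L) (nn_pidx m L) (input_dom (m 0)) fstar"
  shows "(\<exists>n. LLR_guarantee loss (nn_out \<sigma> m' L) (nn_pidx m' L) (input_dom (m 0)) fstar n)
       \<and> (\<exists>n. LLR_guarantee loss (nn_out \<sigma> m L) (nn_pidx m L) (input_dom (m 0)) fstar n)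
       \<and> opt_sample_size loss (nn_out \<sigma> m' L) (nn_pidx m' L) (input_dom (m 0)) fstar
           \<le> opt_sample_size loss (nn_out \<sigma> m L) (nn_pidx m L) (input_dom (m 0)) fstar
       \<and> opt_sample_size loss (nn_out \<sigma> m L) (nn_pidx m L) (input_dom (m 0)) fstar
           \<le> nn_nparams m L"
proof -
  let ?X = "input_dom (m 0)" and ?narrow = "nn_out \<sigma> m L" and ?wide = "nn_out \<sigma> m' L"
  let ?n = "opt_sample_size loss ?narrow (nn_pidx m L) ?X fstar"
  have m0: "m' 0 = m 0" and mL: "m' L = m L" using wide by (auto simp: wider_def)
  note mle = wider_le[OF wide]
  obtain \<theta>0 where "\<theta>0 \<in> target_set ?narrow (nn_pidx m L) ?X fstar"
    using fstar_in by (auto simp: in_fun_space_def target_set_def)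
  then obtain n where n: "n \<le> card (nn_pidx m L)" "LLR_guarantee loss ?narrow (nn_pidx m L) ?X fstar n"
    using LLR_guarantee_exists[where loss = loss, OF loss_nonneg loss_zero] finite_card_nn_pidx by blast
  have narrow_G: "LLR_guarantee loss ?narrow (nn_pidx m L) ?X fstar ?n"
    by (rule LLR_guarantee_opt_sample_size[OF n(2)])
  have narrow_bound: "?n \<le> nn_nparams m L"
    using opt_sample_size_le[OF n(2)] n(1) finite_card_nn_pidx[of m L] by linarith
  have wide_G: "LLR_guarantee loss ?wide (nn_pidx m' L) ?X fstar ?n"
  proof (rule LLR_guarantee_of_tangent_span[where loss = loss, OF loss_nonneg loss_zero _ _ narrow_G])
    fix \<theta> assume \<theta>: "\<theta> \<in> target_set ?narrow (nn_pidx m L) ?X fstar"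
    show "\<theta> \<in> target_set ?wide (nn_pidx m' L) ?X fstar"
      by (intro target_set_nn_mono[where m = m and m' = m' and L = L] mle \<theta>)
  next
    fix \<theta> j assume "\<theta> \<in> target_set ?narrow (nn_pidx m L) ?X fstar" "j \<in> nn_pidx m' L"
    then show "in_span_on ?X (nn_pidx m L) (\<lambda>i. param_partial ?narrow i \<theta>) (param_partial ?wide j \<theta>)"
      by (intro wide_param_partial_in_span[where m = m and m' = m' and L = L, OF sigma_diff mle m0 mL])
        (simp_all add: target_set_def)
  qed
  show ?thesis
    by (intro conjI exI[of _ ?n] wide_G narrow_G opt_sample_size_le[OF wide_G] narrow_bound)
qed

end
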